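(* Let $K$ be an algebraically closed field with a non-trivial non-Archimedean valuation with dense value group, and a fixed splitting $\gamma\mapsto t^\gamma$. Let $\alpha=(\alpha_1,\dots,\alpha_6)\in(K^* )^6$ have distinct entries and $\omega_k=-\operatorname{val}(\alpha_k)$. Let $\omega$ be a value attained by at least two of the $\omega_k$, and set $\beta=\max\{\operatorname{val}(\alpha_m-\alpha_l):\omega_m=\omega_l=\omega,\ m\ne l\}$ (so $\beta\ge-\omega$). Fix indices $i\neq j$ with $\omega_i=\omega_j=\omega$ and $\operatorname{val}(\alpha_i-\alpha_j)=\beta$. Let $\zeta\in K$ with $\operatorname{val}(\zeta)=0$ be such that $\operatorname{in}(\alpha_i-\alpha_j)=\overline{\zeta}\in\widetilde K$, and choose $\gamma\in\operatorname{val}(K^* )$ with $\beta<\gamma<\operatorname{val}(\alpha_i-\alpha_j-\zeta t^\beta)$. Let $\psi\colon\mathbb{P}^1\to\mathbb{P}^1$ be the linear change of coordinates $\psi(x)=x-\alpha_j-\zeta t^\beta-t^\gamma$ and $\alpha'_s=\psi(\alpha_s)$. Then $\alpha'\in(K^* )^6$ and $\omega'_s=-\operatorname{val}(\alpha'_s)$ satisfy: (1) if $\omega_s>\omega_i$ then $\omega'_s=\omega_s$; (2) if $\omega_s<\omega_i$ then $\omega'_s=\omega_i$ and $\operatorname{in}(\alpha'_s)=-\operatorname{in}(\alpha_i)$; (3) if $\omega_s=\omega_i$ and $s\ne i$ then $\omega'_i=-\gamma<\omega'_s=-\operatorname{val}(\alpha_s-\alpha_i)\le\omega_i$.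
   Context: For $a\in K^*$, $\operatorname{in}(a)$ denotes the class of $a\,t^{-\operatorname{val}(a)}$ in the residue field $\widetilde K$. *)

theory Defs
  imports "HOL-Computational_Algebra.Polynomial"
begin

text \<open>A field K (type 'a) with a real-valued non-Archimedean valuation val,
  meaningful on nonzero elements only (val 0 is irrelevant and never used),
  and a splitting tp of the value group: tp g plays the role of t^g.\<close>

definition value_group :: "('a::field \<Rightarrow> real) \<Rightarrow> real set" where
  "value_group val = val ` (UNIV - {0})"

definition is_valuation :: "('a::field \<Rightarrow> real) \<Rightarrow> bool" where
  "is_valuation val \<longleftrightarrow>
     (\<forall>x y. x \<noteq> 0 \<longrightarrow> y \<noteq> 0 \<longrightarrow> val (x * y) = val x + val y) \<and>
     (\<forall>x y. x \<noteq> 0 \<longrightarrow> y \<noteq> 0 \<longrightarrow> x + y \<noteq> 0 \<longrightarrow> val (x + y) \<ge> min (val x) (val y))"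

definition alg_closed :: "'a::field itself \<Rightarrow> bool" where
  "alg_closed _ \<longleftrightarrow> (\<forall>p :: 'a poly. degree p > 0 \<longrightarrow> (\<exists>x. poly p x = 0))"

definition is_splitting :: "('a::field \<Rightarrow> real) \<Rightarrow> (real \<Rightarrow> 'a) \<Rightarrow> bool" where
  "is_splitting val tp \<longleftrightarrow>
     (\<forall>g\<in>value_group val. tp g \<noteq> 0 \<and> val (tp g) = g) \<and>
     (\<forall>g\<in>value_group val. \<forall>h\<in>value_group val. tp (g + h) = tp g * tp h)"

definition valued_setting :: "('a::field \<Rightarrow> real) \<Rightarrow> (real \<Rightarrow> 'a) \<Rightarrow> bool" where
  "valued_setting val tp \<longleftrightarrow>
     alg_closed TYPE('a) \<and> is_valuation val \<and>
     value_group val \<noteq> {0} \<and>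
     (\<forall>x y. x < y \<longrightarrow> (\<exists>g\<in>value_group val. x < g \<and> g < y)) \<and>
     is_splitting val tp"

text \<open>Residue field = O / m; an element of the residue field is represented as
  the equivalence class (a subset of the valuation ring O) of x in O.\<close>
definition resid :: "('a::field \<Rightarrow> real) \<Rightarrow> 'a \<Rightarrow> 'a set" where
  "resid val x = {y. (y = 0 \<or> val y \<ge> 0) \<and> (y = x \<or> val (y - x) > 0)}"

definition initial :: "('a::field \<Rightarrow> real) \<Rightarrow> (real \<Rightarrow> 'a) \<Rightarrow> 'a \<Rightarrow> 'a set" where
  "initial val tp a = resid val (a * tp (- val a))"

end

theory Submission
  imports Defs
begin

text \<open>The new coordinates are a translation, \<open>\<alpha>' s = \<alpha> s - \<alpha> i + \<alpha>' i\<close>, and the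
  choice of \<open>\<gamma>\<close> makes \<open>\<alpha>' i = - t\<^sup>\<gamma> + (higher order terms)\<close>, so \<open>val (\<alpha>' i) = \<gamma>\<close>.
  Since \<open>\<gamma> > \<beta> \<ge> val (\<alpha> i)\<close>, the point \<open>\<alpha>' i\<close> is negligible against every \<open>\<alpha> s\<close> of
  valuation at most \<open>val (\<alpha> i)\<close> and against every difference \<open>\<alpha> s - \<alpha> i\<close> of points of
  the same valuation (those differences have valuation at most \<open>\<beta>\<close>); the strict
  ultrametric inequality then gives all three claims. Points of larger valuation are
  negligible against \<open>\<alpha> i\<close> and are therefore sent near \<open>- \<alpha> i\<close>.\<close>

text \<open>The value \<open>val 0\<close> is junk; here \<open>0\<close> counts as having valuation \<open>+\<infinity>\<close>.\<close>

definition val_exceeds :: "('a::field \<Rightarrow> real) \<Rightarrow> real \<Rightarrow> 'a \<Rightarrow> bool" where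
  "val_exceeds val r x \<longleftrightarrow> x = 0 \<or> r < val x"

context
  fixes val :: "'a::field \<Rightarrow> real"
  assumes valuation: "is_valuation val"
begin

lemma val_mult: "x \<noteq> 0 \<Longrightarrow> y \<noteq> 0 \<Longrightarrow> val (x * y) = val x + val y"
  using valuation unfolding is_valuation_def by blast

lemma val_add_ge: "x \<noteq> 0 \<Longrightarrow> y \<noteq> 0 \<Longrightarrow> x + y \<noteq> 0 \<Longrightarrow> min (val x) (val y) \<le> val (x + y)"
  using valuation unfolding is_valuation_def by blast

lemma val_one: "val 1 = 0"
  using val_mult[of 1 1] by simp

lemma val_uminus: "val (- x) = val x"
proof (cases "x = 0")
  case False
  have "val (-1) + val (-1) = 0"
    using val_mult[of "-1" "-1"] val_one by simp
  then show ?thesis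
    using val_mult[of "-1" x] False by simp
qed simp

lemma val_inverse: "x \<noteq> 0 \<Longrightarrow> val (inverse x) = - val x"
  using val_mult[of x "inverse x"] val_one by simp

lemma val_diff_ge: "x \<noteq> 0 \<Longrightarrow> y \<noteq> 0 \<Longrightarrow> x \<noteq> y \<Longrightarrow> min (val x) (val y) \<le> val (x - y)"
  using val_add_ge[of x "- y"] val_uminus[of y] by simp

lemma val_add_eq_left:
  assumes x: "x \<noteq> 0" and y: "val_exceeds val (val x) y"
  shows "x + y \<noteq> 0 \<and> val (x + y) = val x"
proof (cases "y = 0")
  case False
  then have less: "val x < val y"
    using y unfolding val_exceeds_def by simp
  have nonzero: "x + y \<noteq> 0"
    using less val_uminus[of x] by (auto simp: add_eq_0_iff)
  have "val x \<le> val (x + y)"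
    using val_add_ge[OF x False nonzero] less by simp
  moreover have "min (val (x + y)) (val y) \<le> val x"
    using val_add_ge[of "x + y" "- y"] nonzero False x val_uminus[of y] by simp
  ultimately show ?thesis
    using nonzero less by linarith
qed (simp add: x)

lemma val_exceeds_add:
  assumes "val_exceeds val r x" "val_exceeds val r y"
  shows "val_exceeds val r (x + y)"
  using assms val_add_ge[of x y] unfolding val_exceeds_def by fastforce

lemma val_exceeds_mult:
  "val_exceeds val r x \<Longrightarrow> y \<noteq> 0 \<Longrightarrow> val_exceeds val (r + val y) (x * y)"
  using val_mult[of x y] unfolding val_exceeds_def by (cases "x = 0") auto

lemma resid_eq_of_val_exceeds:
  assumes close: "val_exceeds val 0 (x - y)"
  shows "resid val x = resid val y"
proof -
  have transfer: "z = y \<or> 0 < val (z - y)"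
    if "val_exceeds val 0 (x - y)" "z = x \<or> 0 < val (z - x)" for x y z
    using val_exceeds_add[of 0 "z - x" "x - y"] that unfolding val_exceeds_def by auto
  have "val_exceeds val 0 (y - x)"
    using close val_uminus[of "x - y"] unfolding val_exceeds_def by auto
  then show ?thesis
    unfolding resid_def using transfer close by blast
qed

lemma initial_eq_of_val_exceeds:
  assumes splitting: "is_splitting val tp" and a: "a \<noteq> 0"
    and close: "val_exceeds val (val a) (a - b)"
  shows "initial val tp a = resid val (b * tp (- val a))"
proof -
  have "- val a \<in> value_group val"
    unfolding value_group_def using val_inverse[OF a] a
    by (metis DiffI UNIV_I image_eqI inverse_nonzero_iff_nonzero singletonD)
  then have "tp (- val a) \<noteq> 0" "val (tp (- val a)) = - val a"
    using splitting unfolding is_splitting_def by auto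
  then have "val_exceeds val 0 (a * tp (- val a) - b * tp (- val a))"
    using val_exceeds_mult[OF close, of "tp (- val a)"] by (simp add: left_diff_distrib)
  then show ?thesis
    unfolding initial_def by (rule resid_eq_of_val_exceeds)
qed

lemma val_translate_of_less:
  assumes x: "x \<noteq> 0" and a: "a \<noteq> 0" and less: "val x < val a"
    and e: "val_exceeds val (val a) e"
  shows "x - a + e \<noteq> 0 \<and> val (x - a + e) = val x"
proof -
  have "- a + e \<noteq> 0 \<and> val (- a + e) = val a"
    using val_add_eq_left[of "- a" e] a e val_uminus[of a] by simp
  then have "val_exceeds val (val x) (- a + e)"
    using less unfolding val_exceeds_def by simp
  then have "x + (- a + e) \<noteq> 0 \<and> val (x + (- a + e)) = val x"
    by (rule val_add_eq_left[OF x])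
  then show ?thesis
    by (simp add: algebra_simps)
qed

lemma val_translate_of_greater:
  assumes splitting: "is_splitting val tp" and a: "a \<noteq> 0"
    and x: "val_exceeds val (val a) x" and e: "val_exceeds val (val a) e"
  shows "x - a + e \<noteq> 0 \<and> val (x - a + e) = val a \<and>
    initial val tp (x - a + e) = resid val (- (a * tp (- val a)))"
proof -
  have translate: "x - a + e = - a + (x + e)"
    by simp
  have close: "val_exceeds val (val a) (x + e)"
    using val_exceeds_add[OF x e] .
  then have val_eq: "x - a + e \<noteq> 0 \<and> val (x - a + e) = val a"
    unfolding translate using val_add_eq_left[of "- a"] a val_uminus[of a] by simp
  have "initial val tp (x - a + e) = resid val (- a * tp (- val (x - a + e)))"
  proof (rule initial_eq_of_val_exceeds[OF splitting])
    show "val_exceeds val (val (x - a + e)) (x - a + e - - a)"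
      using close val_eq by simp
  qed (use val_eq in simp)
  then show ?thesis
    using val_eq by simp
qed

end

lemma Max_pairs_ge:
  fixes f :: "nat \<Rightarrow> nat \<Rightarrow> 'b::linorder"
  assumes "m < n" "l < n" "m \<noteq> l" "P m" "P l"
  shows "f m l \<le> Max {f m l | m l. m < n \<and> l < n \<and> m \<noteq> l \<and> P m \<and> P l}"
proof (rule Max_ge)
  show "finite {f m l | m l. m < n \<and> l < n \<and> m \<noteq> l \<and> P m \<and> P l}"
    by (rule finite_subset[of _ "(\<lambda>(m, l). f m l) ` ({..<n} \<times> {..<n})"]) auto
qed (use assms in blast)

theorem lemma5p3:
  fixes val :: "'a::field \<Rightarrow> real" and tp :: "real \<Rightarrow> 'a"
    and \<alpha> :: "nat \<Rightarrow> 'a" and i j :: nat and \<beta> \<gamma> :: real and \<zeta> :: 'a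
  assumes setting: "valued_setting val tp"
    and nonzero: "\<forall>k<6. \<alpha> k \<noteq> 0"
    and distinct: "inj_on \<alpha> {..<6}"
    and ij: "i < 6" "j < 6" "i \<noteq> j" "- val (\<alpha> i) = - val (\<alpha> j)"
    and beta_def: "\<beta> = Max {val (\<alpha> m - \<alpha> l) | m l. m < 6 \<and> l < 6 \<and> m \<noteq> l \<and>
                        - val (\<alpha> m) = - val (\<alpha> i) \<and> - val (\<alpha> l) = - val (\<alpha> i)}"
    and beta_att: "val (\<alpha> i - \<alpha> j) = \<beta>"
    and zeta: "\<zeta> \<noteq> 0" "val \<zeta> = 0" "initial val tp (\<alpha> i - \<alpha> j) = resid val \<zeta>"
    and gamma: "\<gamma> \<in> value_group val" "\<beta> < \<gamma>"
      "\<alpha> i - \<alpha> j - \<zeta> * tp \<beta> = 0 \<or> \<gamma> < val (\<alpha> i - \<alpha> j - \<zeta> * tp \<beta>)"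
  shows "let \<alpha>' = (\<lambda>s. \<alpha> s - \<alpha> j - \<zeta> * tp \<beta> - tp \<gamma>) in
     (\<forall>s<6. \<alpha>' s \<noteq> 0) \<and>
     (\<forall>s<6. - val (\<alpha> s) > - val (\<alpha> i) \<longrightarrow> - val (\<alpha>' s) = - val (\<alpha> s)) \<and>
     (\<forall>s<6. - val (\<alpha> s) < - val (\<alpha> i) \<longrightarrow>
         - val (\<alpha>' s) = - val (\<alpha> i) \<and>
         initial val tp (\<alpha>' s) = resid val (- (\<alpha> i * tp (- val (\<alpha> i))))) \<and>
     (\<forall>s<6. - val (\<alpha> s) = - val (\<alpha> i) \<and> s \<noteq> i \<longrightarrow>
         - val (\<alpha>' i) = - \<gamma> \<and> - \<gamma> < - val (\<alpha>' s) \<and>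
         - val (\<alpha>' s) = - val (\<alpha> s - \<alpha> i) \<and> - val (\<alpha> s - \<alpha> i) \<le> - val (\<alpha> i))"
proof -
  define \<alpha>' where "\<alpha>' = (\<lambda>s. \<alpha> s - \<alpha> j - \<zeta> * tp \<beta> - tp \<gamma>)"
  have V: "is_valuation val" and S: "is_splitting val tp"
    using setting unfolding valued_setting_def by auto
  have ai: "\<alpha> i \<noteq> 0" and diff_nonzero: "\<And>s. s < 6 \<Longrightarrow> s \<noteq> i \<Longrightarrow> \<alpha> s - \<alpha> i \<noteq> 0"
    using nonzero distinct ij by (auto simp: inj_on_def)
  have "tp \<gamma> \<noteq> 0 \<and> val (tp \<gamma>) = \<gamma>"
    using S gamma(1) unfolding is_splitting_def by blast
  then have ai': "\<alpha>' i \<noteq> 0 \<and> val (\<alpha>' i) = \<gamma>"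
    using val_add_eq_left[OF V, of "- tp \<gamma>" "\<alpha> i - \<alpha> j - \<zeta> * tp \<beta>"] gamma(3) val_uminus[OF V]
    unfolding \<alpha>'_def val_exceeds_def by (simp add: algebra_simps)
  have same_val_diff: "val (\<alpha> i) \<le> val (\<alpha> s - \<alpha> i) \<and> val (\<alpha> s - \<alpha> i) \<le> \<beta>"
    if "s < 6" "s \<noteq> i" "val (\<alpha> s) = val (\<alpha> i)" for s
    using val_diff_ge[OF V, of "\<alpha> s" "\<alpha> i"] diff_nonzero that nonzero ij
      Max_pairs_ge[of s 6 i "\<lambda>m. - val (\<alpha> m) = - val (\<alpha> i)" "\<lambda>m l. val (\<alpha> m - \<alpha> l)"]
    unfolding beta_def by auto
  have e: "val_exceeds val (val (\<alpha> i)) (\<alpha>' i)"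
    using same_val_diff[of j] ij ai' gamma(2) unfolding val_exceeds_def by auto
  have translate: "\<alpha>' s = \<alpha> s - \<alpha> i + \<alpha>' i" for s
    unfolding \<alpha>'_def by simp
  have smaller: "\<alpha>' s \<noteq> 0 \<and> val (\<alpha>' s) = val (\<alpha> s)" if "s < 6" "val (\<alpha> s) < val (\<alpha> i)" for s
    using val_translate_of_less[OF V _ ai that(2) e] nonzero that(1) translate[of s] by simp
  have larger: "\<alpha>' s \<noteq> 0 \<and> val (\<alpha>' s) = val (\<alpha> i) \<and>
      initial val tp (\<alpha>' s) = resid val (- (\<alpha> i * tp (- val (\<alpha> i))))"
    if "val (\<alpha> i) < val (\<alpha> s)" for s
    using val_translate_of_greater[OF V S ai _ e] that translate[of s] unfolding val_exceeds_def by simp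
  have equal: "\<alpha>' s \<noteq> 0 \<and> val (\<alpha>' s) = val (\<alpha> s - \<alpha> i)"
    if "s < 6" "s \<noteq> i" "val (\<alpha> s) = val (\<alpha> i)" for s
    using val_add_eq_left[OF V diff_nonzero[OF that(1,2)], of "\<alpha>' i"] same_val_diff[OF that]
      ai' gamma(2) translate[of s] unfolding val_exceeds_def by auto
  have "\<alpha>' s \<noteq> 0" if "s < 6" for s
  proof (cases "s = i")
    case False
    then show ?thesis
      using smaller larger equal that by (cases "val (\<alpha> s)" "val (\<alpha> i)" rule: linorder_cases) auto
  qed (use ai' in simp)
  then show ?thesis
    unfolding Let_def \<alpha>'_def[symmetric]
    using smaller larger equal same_val_diff ai' gamma(2) by force
qed

end
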